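(* Let $G=(V,E)$ be a prime permutation graph, let $(<_1,<_2)$ be a realizer of $G$, and let $w$ be the first element of $<_1$. Then $\vartriangleleft_1^w=\,<_1$ and $\vartriangleleft_2^w=\,<_2$.
   Context: Graphs are finite, simple, undirected, with nonempty vertex set. A module of $G$ is a nonempty $M\subseteq V$ such that every vertex outside $M$ is adjacent to all or none of $M$; $G$ is prime if its only modules are $V$ and the singletons. A realizer of $G$ is a pair $(<_1,<_2)$ of strict linear orders on $V$ such that distinct $u,v$ are adjacent iff they appear in different orders in $<_1$ and $<_2$; $G$ is a permutation graph if it has a realizer. For a pair of binary relations $(\lhd_1,\lhd_2)$ on $V$: its transitive closure is $(\lhd_1^T,\lhd_2^T)$ (componentwise); its closure under $E$ is $(\lhd_1^E,\lhd_2^E)$ where, for $i\in[2]$, $\lhd_i^E=\lhd_i\cup\{(v,u)\mid u\lhd_{3-i}v,\ \{u,v\}\in E\}\cup\{(u,v)\mid u\lhd_{3-i}v,\ \{u,v\}\notin E\}$. For $w\in V$ define $\lhd_{1,0}^w=\{(w,v)\mid v\in V, v\ne w\}$, $\lhd_{2,0}^w=\emptyset$, and for $k\ge0$, $(\lhd_{1,k+1}^w,\lhd_{2,k+1}^w)=((\lhd_{1,k}^w,\lhd_{2,k}^w)^E)^T$. These increase with $k$; $\lhd_i^w$ denotes $\lhd_{i,m}^w$ for $m$ such that the sequence has stabilized. *)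

theory Defs
  imports Main
begin

definition graph :: "'a set \<Rightarrow> 'a set set \<Rightarrow> bool" where
  "graph V E \<longleftrightarrow> finite V \<and> V \<noteq> {} \<and>
     (\<forall>e\<in>E. \<exists>u v. e = {u, v} \<and> u \<in> V \<and> v \<in> V \<and> u \<noteq> v)"

definition is_module :: "'a set \<Rightarrow> 'a set set \<Rightarrow> 'a set \<Rightarrow> bool" where
  "is_module V E M \<longleftrightarrow> M \<noteq> {} \<and> M \<subseteq> V \<and>
     (\<forall>x \<in> V - M. (\<forall>m\<in>M. {x, m} \<in> E) \<or> (\<forall>m\<in>M. {x, m} \<notin> E))"

definition prime_graph :: "'a set \<Rightarrow> 'a set set \<Rightarrow> bool" where
  "prime_graph V E \<longleftrightarrow> (\<forall>M. is_module V E M \<longrightarrow> M = V \<or> (\<exists>v. M = {v}))"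

definition strict_lin_order :: "'a set \<Rightarrow> 'a rel \<Rightarrow> bool" where
  "strict_lin_order V r \<longleftrightarrow> r \<subseteq> V \<times> V \<and> strict_linear_order_on V r"

definition realizer :: "'a set \<Rightarrow> 'a set set \<Rightarrow> 'a rel \<Rightarrow> 'a rel \<Rightarrow> bool" where
  "realizer V E r1 r2 \<longleftrightarrow> strict_lin_order V r1 \<and> strict_lin_order V r2 \<and>
     (\<forall>u\<in>V. \<forall>v\<in>V. u \<noteq> v \<longrightarrow> ({u, v} \<in> E \<longleftrightarrow> ((u, v) \<in> r1 \<longleftrightarrow> (v, u) \<in> r2)))"

definition permutation_graph :: "'a set \<Rightarrow> 'a set set \<Rightarrow> bool" where
  "permutation_graph V E \<longleftrightarrow> graph V E \<and> (\<exists>r1 r2. realizer V E r1 r2)"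

definition closeE :: "'a set set \<Rightarrow> 'a rel \<times> 'a rel \<Rightarrow> 'a rel \<times> 'a rel" where
  "closeE E p = (let (l1, l2) = p in
     (l1 \<union> {(v, u) | u v. (u, v) \<in> l2 \<and> {u, v} \<in> E} \<union> {(u, v) | u v. (u, v) \<in> l2 \<and> {u, v} \<notin> E},
      l2 \<union> {(v, u) | u v. (u, v) \<in> l1 \<and> {u, v} \<in> E} \<union> {(u, v) | u v. (u, v) \<in> l1 \<and> {u, v} \<notin> E}))"

definition closeT :: "'a rel \<times> 'a rel \<Rightarrow> 'a rel \<times> 'a rel" where
  "closeT p = (trancl (fst p), trancl (snd p))"

definition lhd_seq :: "'a set \<Rightarrow> 'a set set \<Rightarrow> 'a \<Rightarrow> nat \<Rightarrow> 'a rel \<times> 'a rel" where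
  "lhd_seq V E w k = ((closeT \<circ> closeE E) ^^ k) ({(w, v) | v. v \<in> V \<and> v \<noteq> w}, {})"

definition lhd_lim :: "'a set \<Rightarrow> 'a set set \<Rightarrow> 'a \<Rightarrow> 'a rel \<times> 'a rel" where
  "lhd_lim V E w = lhd_seq V E w (LEAST m. \<forall>k\<ge>m. lhd_seq V E w k = lhd_seq V E w m)"

end

theory Submission
  imports Defs "HOL-Library.Product_Order"
begin

text \<open>The realizer is a fixed point of both closures and lies above the starting pair, so the
increasing sequence stays below it and, V being finite, stabilizes at a pair (L1, L2) of transitive
relations closed under E in which w is the least element of L1. If two vertices were incomparable
in L1, their component M in the incomparability graph of L1 would be a module: a vertex outside M
is L1-comparable with every vertex of M, and transitivity together with the closure under E forces
it to see two incomparable vertices alike. Since M contains two vertices but not w, this contradicts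
primality. So L1 is total, hence equal to the realizer's first order, and then so is L2.\<close>

definition E_closed :: "'a set set \<Rightarrow> 'a rel \<Rightarrow> 'a rel \<Rightarrow> bool" where
  "E_closed E L1 L2 \<longleftrightarrow>
     (\<forall>u v. (u, v) \<in> L1 \<longrightarrow> (if {u, v} \<in> E then (v, u) \<in> L2 else (u, v) \<in> L2)) \<and>
     (\<forall>u v. (u, v) \<in> L2 \<longrightarrow> (if {u, v} \<in> E then (v, u) \<in> L1 else (u, v) \<in> L1))"

lemma E_closed_commute: "E_closed E L1 L2 \<longleftrightarrow> E_closed E L2 L1"
  unfolding E_closed_def by blast

lemma E_closed_converse: "E_closed E L1 L2 \<Longrightarrow> E_closed E (L1\<inverse>) (L2\<inverse>)"
  unfolding E_closed_def converse_iff by (metis insert_commute)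

lemma E_closed_comparable:
  assumes "E_closed E L1 L2" and "(u, v) \<in> L1 \<or> (v, u) \<in> L1"
  shows "(u, v) \<in> L2 \<or> (v, u) \<in> L2"
  using assms unfolding E_closed_def by (metis insert_commute)

lemma closeE_le_iff_E_closed: "closeE E (L1, L2) \<le> (L1, L2) \<longleftrightarrow> E_closed E L1 L2"
  unfolding closeE_def E_closed_def by (auto split: if_splits)

lemma trancl_subset_iff_trans: "r\<^sup>+ \<subseteq> r \<longleftrightarrow> trans r"
  by (metis subsetI subset_antisym r_into_trancl' trans_trancl trancl_id)

lemma closeT_le_iff_trans: "closeT (L1, L2) \<le> (L1, L2) \<longleftrightarrow> trans L1 \<and> trans L2"
  by (simp add: closeT_def trancl_subset_iff_trans)

lemma mono_closeE: "mono (closeE E)"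
  by (rule monoI) (auto simp: closeE_def less_eq_prod_def split: prod.splits)

lemma mono_closeT: "mono closeT"
  by (rule monoI) (simp add: closeT_def less_eq_prod_def trancl_mono subsetI)

lemma le_closeE: "p \<le> closeE E p"
  by (auto simp: closeE_def less_eq_prod_def split: prod.splits)

lemma le_closeT: "p \<le> closeT p"
  by (auto simp: closeT_def less_eq_prod_def)

lemma closeT_closeE_fixpointD:
  assumes "closeT (closeE E p) = p"
  shows "trans (fst p)" "trans (snd p)" "E_closed E (fst p) (snd p)"
proof -
  have "closeE E p \<le> p"
    using le_closeT[of "closeE E p"] by (simp add: assms)
  then show "E_closed E (fst p) (snd p)"
    using closeE_le_iff_E_closed[of E "fst p" "snd p"] by simp
  have "closeT p \<le> p"
    using mono_closeT le_closeE assms by (metis monoD)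
  then show "trans (fst p)" "trans (snd p)"
    using closeT_le_iff_trans[of "fst p" "snd p"] by simp_all
qed

lemma strict_lin_orderD:
  assumes "strict_lin_order V r"
  shows "r \<subseteq> V \<times> V" "trans r" "irrefl r" "total_on V r"
  using assms by (simp_all add: strict_lin_order_def strict_linear_order_on_def)

lemma realizer_E_closed:
  assumes "realizer V E r1 r2"
  shows "E_closed E r1 r2"
proof -
  have r1: "r1 \<subseteq> V \<times> V" "irrefl r1" "total_on V r1"
    and r2: "r2 \<subseteq> V \<times> V" "irrefl r2" "total_on V r2"
    using assms strict_lin_orderD by (auto simp: realizer_def)
  have edge: "{u, v} \<in> E \<longleftrightarrow> ((u, v) \<in> r1 \<longleftrightarrow> (v, u) \<in> r2)"
    if "u \<in> V" "v \<in> V" "u \<noteq> v" for u v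
    using assms that by (simp add: realizer_def)
  show ?thesis
    unfolding E_closed_def
  proof (intro conjI allI impI)
    fix u v assume uv: "(u, v) \<in> r1"
    then have "u \<in> V" "v \<in> V" "u \<noteq> v"
      using r1 by (auto simp: irrefl_def)
    then show "if {u, v} \<in> E then (v, u) \<in> r2 else (u, v) \<in> r2"
      using edge uv r2(3) by (auto simp: total_on_def)
  next
    fix u v assume uv: "(u, v) \<in> r2"
    then have "u \<in> V" "v \<in> V" "u \<noteq> v"
      using r2 by (auto simp: irrefl_def)
    then show "if {u, v} \<in> E then (v, u) \<in> r1 else (u, v) \<in> r1"
      using edge[of v u] uv r1(3) by (auto simp: total_on_def insert_commute)
  qed
qed

lemma realizer_closeT_closeE_le:
  assumes "realizer V E r1 r2"
  shows "closeT (closeE E (r1, r2)) \<le> (r1, r2)"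
proof -
  have "closeE E (r1, r2) \<le> (r1, r2)"
    using realizer_E_closed[OF assms] by (simp only: closeE_le_iff_E_closed)
  then have "closeT (closeE E (r1, r2)) \<le> closeT (r1, r2)"
    by (rule monoD[OF mono_closeT])
  also have "\<dots> \<le> (r1, r2)"
    using assms strict_lin_orderD(2) unfolding closeT_le_iff_trans realizer_def by blast
  finally show ?thesis .
qed

lemma funpow_le_fixpoint:
  assumes "mono f" and "x \<le> b" and "f b \<le> b"
  shows "(f ^^ n) x \<le> b"
proof (induction n)
  case 0
  show ?case using assms(2) by simp
next
  case (Suc n)
  have "(f ^^ Suc n) x \<le> f b"
    using monoD[OF assms(1) Suc] by simp
  also have "\<dots> \<le> b" by (rule assms(3))
  finally show ?case .
qed

lemma funpow_stabilizes:
  fixes f :: "'a set \<times> 'b set \<Rightarrow> 'a set \<times> 'b set"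
  assumes "mono f" and "x \<le> f x" and "\<And>n. (f ^^ n) x \<le> b"
    and "finite (fst b)" and "finite (snd b)"
  shows "\<exists>m. f ((f ^^ m) x) = (f ^^ m) x"
proof (rule ccontr)
  assume no_fixpoint: "\<nexists>m. f ((f ^^ m) x) = (f ^^ m) x"
  have "(f ^^ n) x < (f ^^ Suc n) x" for n
  proof (rule order_le_neq_trans)
    show "(f ^^ n) x \<le> (f ^^ Suc n) x"
      by (rule funpow_mono2[OF assms(1) le_SucI[OF order_refl] order_refl assms(2)])
    show "(f ^^ n) x \<noteq> (f ^^ Suc n) x"
      using no_fixpoint by (metis comp_apply funpow.simps(2))
  qed
  then have "strict_mono (\<lambda>n. (f ^^ n) x)"
    unfolding strict_mono_Suc_iff by blast
  then have "inj (\<lambda>n. (f ^^ n) x)"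
    by (rule strict_mono_imp_inj_on)
  moreover have "range (\<lambda>n. (f ^^ n) x) \<subseteq> Pow (fst b) \<times> Pow (snd b)"
    unfolding image_subset_iff mem_Times_iff using assms(3) by (simp add: less_eq_prod_def)
  moreover have "finite (Pow (fst b) \<times> Pow (snd b))"
    using assms(4,5) by simp
  ultimately have "finite (UNIV :: nat set)"
    by (rule inj_on_finite)
  then show False by simp
qed

lemma funpow_fixpoint_stable:
  assumes "f ((f ^^ m) x) = (f ^^ m) x" and "m \<le> k"
  shows "(f ^^ k) x = (f ^^ m) x"
  using assms(2) by (induction k rule: dec_induct) (simp_all add: assms(1))

lemma lhd_lim_fixpoint:
  assumes "realizer V E r1 r2" and "finite V" and "\<forall>v\<in>V. v \<noteq> w \<longrightarrow> (w, v) \<in> r1"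
  shows "closeT (closeE E (lhd_lim V E w)) = lhd_lim V E w"
    and "lhd_seq V E w 0 \<le> lhd_lim V E w"
    and "lhd_lim V E w \<le> (r1, r2)"
proof -
  define F where "F = closeT \<circ> closeE E"
  define x :: "'a rel \<times> 'a rel" where "x = ({(w, v) | v. v \<in> V \<and> v \<noteq> w}, {})"
  have seq: "lhd_seq V E w k = (F ^^ k) x" for k
    by (simp add: lhd_seq_def F_def x_def)
  have mono_F: "mono F"
    unfolding F_def by (intro monoI) (simp add: monoD[OF mono_closeT] monoD[OF mono_closeE])
  have x_le: "x \<le> F x"
    unfolding F_def using order_trans[OF le_closeE le_closeT] by simp
  have r_fixpoint: "F (r1, r2) \<le> (r1, r2)"
    unfolding F_def using realizer_closeT_closeE_le[OF assms(1)] by simp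
  have x_le_r: "x \<le> (r1, r2)"
    using assms(3) by (auto simp: x_def)
  have bound: "(F ^^ n) x \<le> (r1, r2)" for n
    by (rule funpow_le_fixpoint[OF mono_F x_le_r r_fixpoint])
  have "finite r1" "finite r2"
    using assms(1,2) strict_lin_orderD(1) finite_subset unfolding realizer_def
    by (metis finite_SigmaI)+
  then obtain m where m: "F ((F ^^ m) x) = (F ^^ m) x"
    using funpow_stabilizes[OF mono_F x_le bound] by auto
  have "\<forall>k\<ge>m. lhd_seq V E w k = lhd_seq V E w m"
    unfolding seq using funpow_fixpoint_stable[OF m] by blast
  define m0 where "m0 = (LEAST m. \<forall>k\<ge>m. lhd_seq V E w k = lhd_seq V E w m)"
  have stable: "\<forall>k\<ge>m0. lhd_seq V E w k = lhd_seq V E w m0"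
    unfolding m0_def by (rule LeastI) fact
  have lim: "lhd_lim V E w = (F ^^ m0) x"
    unfolding lhd_lim_def m0_def[symmetric] by (rule seq)
  have "F ((F ^^ m0) x) = (F ^^ m0) x"
    using stable[rule_format, of "Suc m0"] unfolding seq by simp
  then show "closeT (closeE E (lhd_lim V E w)) = lhd_lim V E w"
    unfolding lim by (simp add: F_def)
  show "lhd_seq V E w 0 \<le> lhd_lim V E w"
    unfolding lim seq using funpow_mono2[OF mono_F _ order_refl x_le, of 0 m0] by simp
  show "lhd_lim V E w \<le> (r1, r2)"
    unfolding lim by (rule bound)
qed

lemma E_closed_comparable_of_common_lower_bound:
  assumes "trans L2" and "E_closed E L1 L2"
    and "(x, a) \<in> L1" and "(x, b) \<in> L1" and "{x, a} \<in> E" and "{x, b} \<notin> E"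
  shows "(a, b) \<in> L1 \<or> (b, a) \<in> L1"
proof -
  have "(a, x) \<in> L2" "(x, b) \<in> L2"
    using assms(2-6) unfolding E_closed_def by metis+
  then have "(a, b) \<in> L2"
    by (rule transD[OF assms(1)])
  then show ?thesis
    using E_closed_comparable[of E L2 L1] assms(2) by (simp add: E_closed_commute)
qed

lemma E_closed_comparable_same_adjacency:
  assumes "trans L1" and "trans L2" and "E_closed E L1 L2"
    and "(a, b) \<notin> L1" and "(b, a) \<notin> L1"
    and "(x, a) \<in> L1 \<or> (a, x) \<in> L1" and "(x, b) \<in> L1 \<or> (b, x) \<in> L1"
  shows "{x, a} \<in> E \<longleftrightarrow> {x, b} \<in> E"
proof -
  have below: "{x, a} \<in> E \<longleftrightarrow> {x, b} \<in> E"
    if "trans S" "E_closed E R S" "(a, b) \<notin> R" "(b, a) \<notin> R" "(x, a) \<in> R" "(x, b) \<in> R"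
    for R S :: "'a rel"
    using E_closed_comparable_of_common_lower_bound[OF that(1,2,5,6)]
      E_closed_comparable_of_common_lower_bound[OF that(1,2,6,5)] that(3,4) by blast
  consider "(x, a) \<in> L1" "(x, b) \<in> L1" | "(a, x) \<in> L1" "(b, x) \<in> L1"
    | "(x, a) \<in> L1" "(b, x) \<in> L1" | "(a, x) \<in> L1" "(x, b) \<in> L1"
    using assms(6,7) by blast
  then show ?thesis
  proof cases
    case 1
    then show ?thesis using below[OF assms(2-5)] by blast
  next
    case 2
    then show ?thesis
      using below[where R = "L1\<inverse>" and S = "L2\<inverse>"] assms(2-5) E_closed_converse[OF assms(3)]
      by simp
  next
    case 3
    then show ?thesis using assms(1,5) by (meson transD)
  next
    case 4
    then show ?thesis using assms(1,4) by (meson transD)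
  qed
qed

definition incomparable_on :: "'a set \<Rightarrow> 'a rel \<Rightarrow> 'a rel" where
  "incomparable_on V L = {(p, q). p \<in> V \<and> q \<in> V \<and> p \<noteq> q \<and> (p, q) \<notin> L \<and> (q, p) \<notin> L}"

lemma incomparable_component_is_module:
  assumes "trans L1" and "trans L2" and "E_closed E L1 L2" and "a \<in> V"
  shows "is_module V E ((incomparable_on V L1)\<^sup>* `` {a})"
proof -
  let ?I = "incomparable_on V L1"
  let ?M = "?I\<^sup>* `` {a}"
  have "m \<in> V" if "(a, m) \<in> ?I\<^sup>*" for m
    using that assms(4) by (induction rule: rtrancl_induct) (auto simp: incomparable_on_def)
  then have M_sub: "?M \<subseteq> V" by blast
  have "(\<forall>m\<in>?M. {x, m} \<in> E) \<or> (\<forall>m\<in>?M. {x, m} \<notin> E)" if x: "x \<in> V - ?M" for x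
  proof -
    have comparable: "(x, m) \<in> L1 \<or> (m, x) \<in> L1" if "m \<in> ?M" for m
    proof (rule ccontr)
      assume "\<not> ?thesis"
      then have "(m, x) \<in> ?I"
        using x that M_sub by (auto simp: incomparable_on_def)
      then show False
        using x that by (auto intro: rtrancl_into_rtrancl)
    qed
    have "{x, m} \<in> E \<longleftrightarrow> {x, a} \<in> E" if "(a, m) \<in> ?I\<^sup>*" for m
      using that
    proof (induction rule: rtrancl_induct)
      case base
      show ?case ..
    next
      case (step m n)
      then have "m \<in> ?M" "n \<in> ?M" "(m, n) \<notin> L1" "(n, m) \<notin> L1"
        by (auto simp: incomparable_on_def intro: rtrancl_into_rtrancl)
      then have "{x, m} \<in> E \<longleftrightarrow> {x, n} \<in> E"
        using E_closed_comparable_same_adjacency[OF assms(1-3)] comparable by blast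
      with step.IH show ?case by blast
    qed
    then show ?thesis by blast
  qed
  then show ?thesis
    unfolding is_module_def using M_sub by blast
qed

lemma prime_graph_total_on:
  assumes "prime_graph V E" and "trans L1" and "trans L2" and "E_closed E L1 L2"
    and "w \<in> V" and least: "\<forall>v\<in>V. v \<noteq> w \<longrightarrow> (w, v) \<in> L1"
  shows "total_on V L1"
proof (rule total_onI, rule ccontr)
  fix a b assume ab: "a \<in> V" "b \<in> V" "a \<noteq> b" and "\<not> ((a, b) \<in> L1 \<or> (b, a) \<in> L1)"
  then have ab_I: "(a, b) \<in> incomparable_on V L1"
    by (auto simp: incomparable_on_def)
  let ?M = "(incomparable_on V L1)\<^sup>* `` {a}"
  have "is_module V E ?M"
    using incomparable_component_is_module[OF assms(2-4) ab(1)] .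
  then have "?M = V \<or> (\<exists>v. ?M = {v})"
    using assms(1) by (simp add: prime_graph_def)
  moreover have "a \<in> ?M" "b \<in> ?M"
    using ab_I by auto
  moreover have "w \<notin> ?M"
  proof
    assume "w \<in> ?M"
    then have "(a, w) \<in> (incomparable_on V L1)\<^sup>*" by simp
    then show False
    proof (cases rule: rtranclE)
      case base
      then show False using ab_I least ab by (auto simp: incomparable_on_def)
    next
      case (step y)
      then show False using least by (auto simp: incomparable_on_def)
    qed
  qed
  ultimately show False
    using ab(3) assms(5) by (metis singletonD)
qed

lemma E_closed_total_on:
  assumes "E_closed E L1 L2" and "total_on V L1"
  shows "total_on V L2"
  using assms E_closed_comparable unfolding total_on_def by metis

lemma strict_lin_order_eq_if_total_subset:
  assumes "strict_lin_order V r" and "L \<subseteq> r" and "total_on V L"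
  shows "L = r"
proof
  show "r \<subseteq> L"
  proof
    fix p assume p: "p \<in> r"
    obtain u v where uv: "p = (u, v)" by fastforce
    have "u \<in> V" "v \<in> V" "u \<noteq> v"
      using p uv strict_lin_orderD[OF assms(1)] by (auto simp: irrefl_def)
    then have "(u, v) \<in> L \<or> (v, u) \<in> L"
      using assms(3) by (simp add: total_on_def)
    moreover have "(v, u) \<notin> r"
      using p uv strict_lin_orderD[OF assms(1)] by (metis irrefl_def transD)
    ultimately show "p \<in> L"
      using assms(2) uv by blast
  qed
qed (rule assms(2))

theorem corollary5p7:
  fixes V :: "'a set" and E :: "'a set set" and r1 r2 :: "'a rel" and w :: 'a
  assumes "permutation_graph V E"
    and "prime_graph V E"
    and "realizer V E r1 r2"
    and "w \<in> V" and "\<forall>v\<in>V. v \<noteq> w \<longrightarrow> (w, v) \<in> r1"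
  shows "fst (lhd_lim V E w) = r1 \<and> snd (lhd_lim V E w) = r2"
proof -
  let ?L = "lhd_lim V E w"
  have "finite V"
    using assms(1) by (simp add: permutation_graph_def graph_def)
  note lim = lhd_lim_fixpoint[OF assms(3) this assms(5)]
  note closed = closeT_closeE_fixpointD[OF lim(1)]
  have "\<forall>v\<in>V. v \<noteq> w \<longrightarrow> (w, v) \<in> fst ?L"
    using lim(2) by (auto simp: lhd_seq_def less_eq_prod_def)
  then have total1: "total_on V (fst ?L)"
    using prime_graph_total_on[OF assms(2) closed assms(4)] by blast
  have total2: "total_on V (snd ?L)"
    using E_closed_total_on[OF closed(3) total1] .
  have "strict_lin_order V r1" "strict_lin_order V r2"
    using assms(3) by (simp_all add: realizer_def)
  moreover have "fst ?L \<subseteq> r1" "snd ?L \<subseteq> r2"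
    using lim(3) by (simp_all add: less_eq_prod_def)
  ultimately show ?thesis
    using strict_lin_order_eq_if_total_subset total1 total2 by blast
qed

end
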